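(* (a) For the complete graph $K_n$ with $n\ge 2$, $\gamma(K_n)=\dfrac{n}{n-1}$. (b) For the cycle $C_n$ with $n\ge 3$, $\gamma(C_n)=\dfrac{n}{\lfloor n/2\rfloor\,\lceil n/2\rceil}$.
   Context: For a finite simple undirected graph $G$ with $n$ vertices, let $\mathcal{F}=\{x\in\mathbb{R}^{V(G)} : \sum_{v} x_v = 0,\ \|x\|_\infty = 1\}$, for $x\in\mathcal{F}$ let $\gamma_x(G)=\max_{uv\in E(G)}|x_u-x_v|$, and $\gamma(G)=\min_{x\in\mathcal{F}}\gamma_x(G)$. *)

theory Defs
  imports Complex_Main
begin

text \<open>A finite simple graph is given by a finite vertex set V and a symmetric,
irreflexive edge relation E (only its restriction to V matters).\<close>

definition sup_norm :: "'a set \<Rightarrow> ('a \<Rightarrow> real) \<Rightarrow> real" where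
  "sup_norm V x = Max ((\<lambda>v. \<bar>x v\<bar>) ` V)"

definition feasible :: "'a set \<Rightarrow> ('a \<Rightarrow> real) set" where
  "feasible V = {x. (\<Sum>v\<in>V. x v) = 0 \<and> sup_norm V x = 1}"

definition gamma_x :: "'a set \<Rightarrow> ('a \<Rightarrow> 'a \<Rightarrow> bool) \<Rightarrow> ('a \<Rightarrow> real) \<Rightarrow> real" where
  "gamma_x V E x = Max {\<bar>x u - x v\<bar> | u v. u \<in> V \<and> v \<in> V \<and> E u v}"

definition gamma :: "'a set \<Rightarrow> ('a \<Rightarrow> 'a \<Rightarrow> bool) \<Rightarrow> real" where
  "gamma V E = Inf (gamma_x V E ` feasible V)"

definition complete_edge :: "nat \<Rightarrow> nat \<Rightarrow> bool" where
  "complete_edge u v \<longleftrightarrow> u \<noteq> v"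

definition cycle_edge :: "nat \<Rightarrow> nat \<Rightarrow> nat \<Rightarrow> bool" where
  "cycle_edge n u v \<longleftrightarrow> v = (u + 1) mod n \<or> u = (v + 1) mod n"

end

theory Submission
  imports Defs
begin

text \<open>Lower bound: pick \<open>w\<close> with \<open>\<bar>x w\<bar> = 1\<close>. Since \<open>x\<close> sums to zero,
\<open>n x w = (\<Sum>u. x w - x u)\<close>, and each difference is at most the graph distance from \<open>w\<close>
to \<open>u\<close> times \<open>\<gamma>\<^sub>x\<close>, so \<open>n \<le> \<gamma>\<^sub>x \<Sum>\<^sub>u dist(w,u)\<close>. For \<open>K\<^sub>n\<close> the distance sum is
\<open>n - 1\<close>, for \<open>C\<^sub>n\<close> it is \<open>\<lfloor>n/2\<rfloor>\<lceil>n/2\<rceil>\<close>. Upper bound: the vector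
\<open>x u = 1 - \<gamma> dist(0,u)\<close> is feasible and changes by at most \<open>\<gamma>\<close> along every edge.\<close>

lemma gamma_eqI:
  assumes "x0 \<in> feasible V" "gamma_x V E x0 \<le> c"
    and "\<And>x. x \<in> feasible V \<Longrightarrow> c \<le> gamma_x V E x"
  shows "gamma V E = c"
proof -
  have "gamma_x V E x0 = c" using assms by force
  then show ?thesis
    unfolding gamma_def by - (rule cInf_eq_minimum, use assms in \<open>force+\<close>)
qed

lemma finite_edge_differences:
  assumes "finite V"
  shows "finite {\<bar>x u - x v\<bar> | u v. u \<in> V \<and> v \<in> V \<and> E u v}"
proof -
  have "{\<bar>x u - x v\<bar> | u v. u \<in> V \<and> v \<in> V \<and> E u v}
      \<subseteq> (\<lambda>(u, v). \<bar>x u - x v\<bar>) ` (V \<times> V)"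
    by force
  then show ?thesis using assms finite_subset by blast
qed

lemma edge_difference_le_gamma_x:
  assumes "finite V" "u \<in> V" "v \<in> V" "E u v"
  shows "\<bar>x u - x v\<bar> \<le> gamma_x V E x"
  unfolding gamma_x_def
  by (rule Max_ge[OF finite_edge_differences[OF assms(1)]]) (use assms in blast)

lemma gamma_x_le:
  assumes "finite V" "u \<in> V" "v \<in> V" "E u v"
    and "\<And>a b. a \<in> V \<Longrightarrow> b \<in> V \<Longrightarrow> E a b \<Longrightarrow> \<bar>x a - x b\<bar> \<le> c"
  shows "gamma_x V E x \<le> c"
  unfolding gamma_x_def
  by (rule Max.boundedI[OF finite_edge_differences[OF assms(1)]]) (use assms in blast)+

lemma gamma_x_walk:
  assumes "finite V" "\<And>i. i \<le> k \<Longrightarrow> p i \<in> V" "\<And>i. i < k \<Longrightarrow> E (p i) (p (Suc i))"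
  shows "\<bar>x (p 0) - x (p k)\<bar> \<le> real k * gamma_x V E x"
  using assms(2,3)
proof (induction k)
  case 0
  then show ?case by simp
next
  case (Suc k)
  have "\<bar>x (p 0) - x (p k)\<bar> \<le> real k * gamma_x V E x"
    using Suc by simp
  moreover have "\<bar>x (p k) - x (p (Suc k))\<bar> \<le> gamma_x V E x"
    using Suc.prems by (intro edge_difference_le_gamma_x[OF assms(1)]) auto
  ultimately show ?case by (simp add: algebra_simps)
qed

lemma sup_norm_eqI:
  assumes "finite V" "w \<in> V" "\<bar>x w\<bar> = 1" "\<And>v. v \<in> V \<Longrightarrow> \<bar>x v\<bar> \<le> 1"
  shows "sup_norm V x = 1"
  unfolding sup_norm_def by (rule Max_eqI) (use assms in auto)

lemma sup_norm_attained:
  assumes "finite V" "V \<noteq> {}"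
  shows "\<exists>w\<in>V. \<bar>x w\<bar> = sup_norm V x"
proof -
  have "Max ((\<lambda>v. \<bar>x v\<bar>) ` V) \<in> (\<lambda>v. \<bar>x v\<bar>) ` V"
    using assms by (intro Max_in) auto
  then show ?thesis unfolding sup_norm_def by auto
qed

lemma card_le_gamma_x_times_distance_sum:
  assumes "finite V" "V \<noteq> {}" "x \<in> feasible V"
    and dist: "\<And>u v. u \<in> V \<Longrightarrow> v \<in> V \<Longrightarrow> \<bar>x u - x v\<bar> \<le> d u v * gamma_x V E x"
  shows "\<exists>w\<in>V. real (card V) \<le> gamma_x V E x * (\<Sum>u\<in>V. d w u)"
proof -
  have sum0: "(\<Sum>u\<in>V. x u) = 0" and norm1: "sup_norm V x = 1"
    using assms(3) by (auto simp: feasible_def)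
  obtain w where w: "w \<in> V" "\<bar>x w\<bar> = 1"
    using sup_norm_attained[OF assms(1,2), of x] norm1 by auto
  have "real (card V) = \<bar>(\<Sum>u\<in>V. x w - x u)\<bar>"
    using w(2) by (simp add: sum_subtractf sum0 abs_mult)
  also have "\<dots> \<le> (\<Sum>u\<in>V. \<bar>x w - x u\<bar>)"
    by (rule sum_abs)
  also have "\<dots> \<le> (\<Sum>u\<in>V. d w u * gamma_x V E x)"
    by (rule sum_mono) (use w dist in auto)
  finally show ?thesis
    using w(1) by (auto simp: sum_distrib_left mult.commute)
qed

lemma gamma_x_complete_graph_ge:
  assumes "n \<ge> 2" "x \<in> feasible {0..<n}"
  shows "real n / (real n - 1) \<le> gamma_x {0..<n} complete_edge x"
proof -
  let ?V = "{0..<n}" and ?d = "\<lambda>u v. if u = v then 0 else 1 :: real"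
  have "\<bar>x u - x v\<bar> \<le> ?d u v * gamma_x ?V complete_edge x" if "u \<in> ?V" "v \<in> ?V" for u v
    using that by (auto intro: edge_difference_le_gamma_x simp: complete_edge_def)
  from card_le_gamma_x_times_distance_sum[OF _ _ assms(2) this]
  obtain w where w: "w \<in> ?V" "real n \<le> gamma_x ?V complete_edge x * (\<Sum>u\<in>?V. ?d w u)"
    using assms(1) by auto
  have "(\<Sum>u\<in>?V. ?d w u) = real n - 1"
    using w(1) assms(1) by (simp add: sum.If_cases Diff_eq[symmetric] of_nat_diff)
  then have "real n \<le> gamma_x ?V complete_edge x * (real n - 1)"
    using w(2) by (simp only:)
  then show ?thesis using assms(1) by (simp add: field_simps)
qed

lemma gamma_complete_graph:
  assumes "n \<ge> 2"
  shows "gamma {0..<n} complete_edge = real n / (real n - 1)"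
proof -
  let ?V = "{0..<n}" and ?c = "real n / (real n - 1)"
  have n1: "real n - 1 > 0" using assms by simp
  define x0 :: "nat \<Rightarrow> real" where "x0 v = (if v = 0 then 1 else - 1 / (real n - 1))" for v
  have "(\<Sum>v\<in>?V. x0 v) = x0 0 + (\<Sum>v\<in>?V - {0}. x0 v)"
    using assms by (simp add: sum.remove)
  also have "(\<Sum>v\<in>?V - {0}. x0 v) = (\<Sum>v\<in>?V - {0}. - 1 / (real n - 1))"
    by (rule sum.cong) (auto simp: x0_def)
  also have "x0 0 + \<dots> = 0"
    using assms n1 by (simp add: x0_def of_nat_diff)
  finally have "(\<Sum>v\<in>?V. x0 v) = 0" .
  moreover have "sup_norm ?V x0 = 1"
    using assms n1 by (intro sup_norm_eqI[of _ 0]) (auto simp: x0_def field_simps)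
  ultimately have feasible: "x0 \<in> feasible ?V"
    by (simp add: feasible_def)
  have "gamma_x ?V complete_edge x0 \<le> ?c"
  proof (rule gamma_x_le[of _ 0 1])
    fix a b
    have "1 / (real n - 1) > 0" using n1 by simp
    then have "\<bar>x0 a - x0 b\<bar> \<le> 1 + 1 / (real n - 1)"
      by (auto simp: x0_def simp del: zero_less_divide_1_iff)
    also have "\<dots> = ?c" using n1 by (simp add: field_simps)
    finally show "\<bar>x0 a - x0 b\<bar> \<le> ?c" .
  qed (use assms in \<open>auto simp: complete_edge_def\<close>)
  then show ?thesis
    using gamma_eqI[OF feasible _ gamma_x_complete_graph_ge[OF assms]] by blast
qed

definition cycle_dist :: "nat \<Rightarrow> nat \<Rightarrow> nat \<Rightarrow> nat" where
  "cycle_dist n u v = min ((v + n - u) mod n) (n - (v + n - u) mod n)"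

lemma sum_min_distance_to_ends:
  "(\<Sum>k<n. min k (n - k)) = ((n::nat) div 2) * ((n + 1) div 2)"
proof (induction n rule: nat_induct2)
  case (step m)
  have "(\<Sum>k<m + 2. min k (m + 2 - k)) = (\<Sum>k<Suc m. min (Suc k) (Suc m - k))"
    unfolding add_2_eq_Suc' by (subst sum.lessThan_Suc_shift) simp
  also have "\<dots> = (\<Sum>k<Suc m. 1 + min k (m - k))"
    by (rule sum.cong) auto
  also have "\<dots> = Suc m + (\<Sum>k<Suc m. min k (m - k))"
    by (simp only: sum.distrib) simp
  also have "(\<Sum>k<Suc m. min k (m - k)) = (\<Sum>k<m. min k (m - k))"
    by simp
  also have "Suc m + \<dots> = (m + 2) div 2 * ((m + 2 + 1) div 2)"
    using step by (cases "even m") (auto elim!: evenE oddE)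
  finally show ?case .
qed simp_all

lemma rotate_mod_inverse:
  fixes n u w :: nat
  assumes "u < n" "w < n"
  shows "(w + (u + n - w) mod n) mod n = u"
    and "((w + u) mod n + n - w) mod n = u"
proof -
  have "(w + (u + n - w) mod n) mod n = (w + (u + n - w)) mod n"
    by (rule mod_add_right_eq)
  also have "w + (u + n - w) = u + n"
    using assms by simp
  finally show "(w + (u + n - w) mod n) mod n = u"
    using assms by simp
  show "((w + u) mod n + n - w) mod n = u"
  proof (cases "w + u < n")
    case False
    then have "(w + u) mod n = w + u - n" using assms by (simp add: le_mod_geq)
    then show ?thesis using False assms by simp
  qed simp
qed

lemma sum_cycle_dist:
  assumes "w < n"
  shows "(\<Sum>v\<in>{0..<n}. real (cycle_dist n w v)) = real (n div 2) * real ((n + 1) div 2)"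
proof -
  have "(\<Sum>v\<in>{0..<n}. cycle_dist n w v) = (\<Sum>k\<in>{0..<n}. min k (n - k))"
    by (rule sum.reindex_bij_witness[where i = "\<lambda>k. (w + k) mod n" and j = "\<lambda>v. (v + n - w) mod n"])
      (use assms in \<open>auto simp: rotate_mod_inverse cycle_dist_def\<close>)
  then show ?thesis
    by (simp add: atLeast0LessThan sum_min_distance_to_ends flip: of_nat_sum)
qed

lemma cycle_walk:
  assumes "u < n"
  shows "\<bar>x u - x ((u + k) mod n)\<bar> \<le> real k * gamma_x {0..<n} (cycle_edge n) x"
  using gamma_x_walk[of "{0..<n}" k "\<lambda>i. (u + i) mod n" "cycle_edge n" x] assms
  by (simp add: cycle_edge_def mod_Suc_eq)

lemma cycle_difference_le:
  assumes "u < n" "v < n"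
  shows "\<bar>x u - x v\<bar> \<le> real (cycle_dist n u v) * gamma_x {0..<n} (cycle_edge n) x"
proof -
  define k where "k = (v + n - u) mod n"
  have "(u + k) mod n = v"
    using assms by (simp add: k_def rotate_mod_inverse)
  have "k < n" using assms by (simp add: k_def)
  have "(v + (n - k)) mod n = (u + k + (n - k)) mod n"
    using \<open>(u + k) mod n = v\<close> by (metis mod_add_left_eq)
  also have "\<dots> = (u + n) mod n"
    using \<open>k < n\<close> by simp
  finally have "(v + (n - k)) mod n = u" using assms by simp
  have "\<bar>x u - x v\<bar> \<le> real k * gamma_x {0..<n} (cycle_edge n) x"
    using cycle_walk[OF assms(1), of x k] \<open>(u + k) mod n = v\<close> by simp
  moreover have "\<bar>x u - x v\<bar> \<le> real (n - k) * gamma_x {0..<n} (cycle_edge n) x"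
    using cycle_walk[OF assms(2), of x "n - k"] \<open>(v + (n - k)) mod n = u\<close> by (simp add: abs_minus_commute)
  ultimately show ?thesis
    by (simp add: cycle_dist_def k_def[symmetric] min_def)
qed

lemma cycle_dist_0:
  "v < n \<Longrightarrow> cycle_dist n 0 v = min v (n - v)"
  by (simp add: cycle_dist_def)

lemma cycle_dist_0_edge:
  assumes "a < n" "b < n" "cycle_edge n a b"
  shows "\<bar>real (cycle_dist n 0 a) - real (cycle_dist n 0 b)\<bar> \<le> 1"
proof -
  have successor: "min u (n - u) \<le> min v (n - v) + 1 \<and> min v (n - v) \<le> min u (n - u) + 1"
    if "u < n" "v = (u + 1) mod n" for u v
  proof (cases "u + 1 < n")
    case False
    then have "u + 1 = n" using that by simp
    then have "v = 0" using that by simp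
    then show ?thesis using \<open>u + 1 = n\<close> by auto
  qed (use that in auto)
  have "min a (n - a) \<le> min b (n - b) + 1 \<and> min b (n - b) \<le> min a (n - a) + 1"
    using assms successor[of a b] successor[of b a] unfolding cycle_edge_def by auto
  then have "\<bar>real (min a (n - a)) - real (min b (n - b))\<bar> \<le> 1"
    by linarith
  then show ?thesis
    using assms by (simp add: cycle_dist_0)
qed

lemma gamma_x_cycle_ge:
  assumes "n \<ge> 2" "x \<in> feasible {0..<n}"
  shows "real n / (real (n div 2) * real ((n + 1) div 2)) \<le> gamma_x {0..<n} (cycle_edge n) x"
proof -
  let ?V = "{0..<n}" and ?E = "cycle_edge n"
  have "\<bar>x u - x v\<bar> \<le> real (cycle_dist n u v) * gamma_x ?V ?E x" if "u \<in> ?V" "v \<in> ?V" for u v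
    using that by (simp add: cycle_difference_le)
  from card_le_gamma_x_times_distance_sum[OF _ _ assms(2) this]
  obtain w where "w \<in> ?V" "real n \<le> gamma_x ?V ?E x * (\<Sum>v\<in>?V. real (cycle_dist n w v))"
    using assms(1) by auto
  then have "real n \<le> gamma_x ?V ?E x * (real (n div 2) * real ((n + 1) div 2))"
    by (simp add: sum_cycle_dist)
  moreover have "real (n div 2) * real ((n + 1) div 2) > 0"
    using assms(1) by simp
  ultimately show ?thesis by (simp add: field_simps)
qed

lemma cycle_profile_feasible:
  assumes "n \<ge> 2" and c: "c = real n / (real (n div 2) * real ((n + 1) div 2))"
  shows "(\<lambda>v. 1 - real (cycle_dist n 0 v) * c) \<in> feasible {0..<n}"
proof -
  let ?V = "{0..<n}" and ?x = "\<lambda>v. 1 - real (cycle_dist n 0 v) * c"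
  define S where "S = real (n div 2) * real ((n + 1) div 2)"
  have "S > 0" using assms(1) by (simp add: S_def)
  have c_S: "c = real n / S" by (simp add: c S_def)
  have "c > 0" using \<open>S > 0\<close> assms(1) by (simp add: c_S)
  have "(\<Sum>v\<in>?V. ?x v) = real n - S * c"
    using sum_cycle_dist[of 0 n] assms(1) by (simp add: S_def sum_subtractf flip: sum_distrib_right)
  also have "\<dots> = 0" using \<open>S > 0\<close> by (simp add: c_S)
  finally have "(\<Sum>v\<in>?V. ?x v) = 0" .
  moreover have "\<bar>?x v\<bar> \<le> 1" if "v < n" for v
  proof -
    have "cycle_dist n 0 v * n \<le> (n div 2) * (2 * ((n + 1) div 2))"
      using that by (intro mult_le_mono) (auto simp: cycle_dist_0)
    then have "real (cycle_dist n 0 v * n) \<le> real (n div 2 * (2 * ((n + 1) div 2)))"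
      by (rule of_nat_mono)
    then have "real (cycle_dist n 0 v) * real n \<le> 2 * S"
      by (simp add: S_def)
    then have "real (cycle_dist n 0 v) * c \<le> 2"
      using \<open>S > 0\<close> by (simp add: c_S field_simps)
    moreover have "real (cycle_dist n 0 v) * c \<ge> 0" using \<open>c > 0\<close> by simp
    ultimately show ?thesis by simp
  qed
  then have "sup_norm ?V ?x = 1"
    using assms(1) by (intro sup_norm_eqI[of _ 0]) (auto simp: cycle_dist_def)
  ultimately show ?thesis
    by (simp add: feasible_def)
qed

lemma gamma_x_cycle_profile_le:
  assumes "n \<ge> 2" "c \<ge> 0"
  shows "gamma_x {0..<n} (cycle_edge n) (\<lambda>v. 1 - real (cycle_dist n 0 v) * c) \<le> c"
proof (rule gamma_x_le[of _ 0 1])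
  fix a b assume "a \<in> {0..<n}" "b \<in> {0..<n}" "cycle_edge n a b"
  then have "\<bar>real (cycle_dist n 0 a) - real (cycle_dist n 0 b)\<bar> \<le> 1"
    by (intro cycle_dist_0_edge) auto
  then have "c * \<bar>real (cycle_dist n 0 b) - real (cycle_dist n 0 a)\<bar> \<le> c"
    using assms(2) by (simp add: abs_minus_commute mult_left_le)
  moreover have "(1 - real (cycle_dist n 0 a) * c) - (1 - real (cycle_dist n 0 b) * c)
      = c * (real (cycle_dist n 0 b) - real (cycle_dist n 0 a))"
    by (simp add: algebra_simps)
  ultimately show "\<bar>(1 - real (cycle_dist n 0 a) * c) - (1 - real (cycle_dist n 0 b) * c)\<bar> \<le> c"
    using assms(2) by (simp only: abs_mult abs_of_nonneg)
qed (use assms in \<open>auto simp: cycle_edge_def\<close>)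

lemma gamma_cycle_graph:
  assumes "n \<ge> 2"
  shows "gamma {0..<n} (cycle_edge n) = real n / (real (n div 2) * real ((n + 1) div 2))"
proof (rule gamma_eqI)
  let ?c = "real n / (real (n div 2) * real ((n + 1) div 2))"
  show "(\<lambda>v. 1 - real (cycle_dist n 0 v) * ?c) \<in> feasible {0..<n}"
    using cycle_profile_feasible[OF assms refl] .
  show "gamma_x {0..<n} (cycle_edge n) (\<lambda>v. 1 - real (cycle_dist n 0 v) * ?c) \<le> ?c"
    by (rule gamma_x_cycle_profile_le[OF assms]) simp
qed (rule gamma_x_cycle_ge[OF assms])

theorem corollary3p3:
  shows "(\<forall>n::nat. n \<ge> 2 \<longrightarrow>
            gamma {0..<n} complete_edge = real n / (real n - 1))
       \<and> (\<forall>n::nat. n \<ge> 3 \<longrightarrow>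
            gamma {0..<n} (cycle_edge n) = real n / (real (n div 2) * real ((n + 1) div 2)))"
  using gamma_complete_graph gamma_cycle_graph by simp

end
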